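(* Let $\mathbf{C}$ be a locally small category, $\Omega$ an object, $\Phi\colon\mathbf{C}^{\mathrm{op}}\to\mathbf{Pos}$ a functor whose fibres have all meets preserved by reindexing $f^*=\Phi f$, and $d_\Omega\in\Phi\Omega$. Let $\alpha_Y(S)=\bigwedge_{k\in S}k^*(d_\Omega)$, $\gamma_Y(d)=\{k\in\mathbf{C}(Y,\Omega)\mid d\preceq k^*(d_\Omega)\}$ and $\mathrm{cl}_Y=\gamma_Y\circ\alpha_Y$. Let $F\colon\mathbf{C}\to\mathbf{C}$ be a functor, $(\mathit{ev}_\lambda\colon F\Omega\to\Omega)_{\lambda\in\Lambda}$ morphisms, and $\Lambda_Y(S)=\{\mathit{ev}_\lambda\circ Fh\mid\lambda\in\Lambda,h\in S\}$. Let $X$ be an object and $\mathrm{cl}'_X$ a closure operator on $(\mathcal{P}(\mathbf{C}(X,\Omega)),\subseteq)$ that is a subclosure of $\mathrm{cl}_X$, i.e. $\mathrm{cl}'_X(S)\subseteq\mathrm{cl}_X(S)$ for all $S$. Then $\mathrm{cl}'_X$ is compatible (i.e. $\Lambda_X\circ\mathrm{cl}'_X\circ\mathrm{cl}_X\subseteq\mathrm{cl}_{FX}\circ\Lambda_X\circ\mathrm{cl}'_X$ pointwise) if and only if $\alpha_{FX}(\Lambda_X(\mathrm{cl}'_X(S)))\preceq\alpha_{FX}(\Lambda_X(\mathrm{cl}_X(S)))$ for all $S\subseteq\mathbf{C}(X,\Omega)$.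
   Context: A closure operator is a monotone, idempotent, extensive map. *)

theory Defs
  imports Main
begin

record ('o, 'm) cat =
  Obj :: "'o set"
  Mor :: "'m set"
  Dom :: "'m \<Rightarrow> 'o"
  Cod :: "'m \<Rightarrow> 'o"
  Comp :: "'m \<Rightarrow> 'm \<Rightarrow> 'm"   (* Comp g f = g \<circ> f, defined when Cod f = Dom g *)
  Ident :: "'o \<Rightarrow> 'm"

definition hom :: "('o, 'm) cat \<Rightarrow> 'o \<Rightarrow> 'o \<Rightarrow> 'm set" where
  "hom C X Y = {f \<in> Mor C. Dom C f = X \<and> Cod C f = Y}"

definition category :: "('o, 'm) cat \<Rightarrow> bool" where
  "category C \<longleftrightarrow>
     (\<forall>f\<in>Mor C. Dom C f \<in> Obj C \<and> Cod C f \<in> Obj C) \<and>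
     (\<forall>X\<in>Obj C. Ident C X \<in> hom C X X) \<and>
     (\<forall>f\<in>Mor C. \<forall>g\<in>Mor C. Cod C f = Dom C g \<longrightarrow>
        Comp C g f \<in> hom C (Dom C f) (Cod C g)) \<and>
     (\<forall>f\<in>Mor C. \<forall>g\<in>Mor C. \<forall>h\<in>Mor C. Cod C f = Dom C g \<longrightarrow> Cod C g = Dom C h \<longrightarrow>
        Comp C h (Comp C g f) = Comp C (Comp C h g) f) \<and>
     (\<forall>f\<in>Mor C. Comp C (Ident C (Cod C f)) f = f \<and> Comp C f (Ident C (Dom C f)) = f)"

definition endofunctor :: "('o, 'm) cat \<Rightarrow> ('o \<Rightarrow> 'o) \<Rightarrow> ('m \<Rightarrow> 'm) \<Rightarrow> bool" where
  "endofunctor C Fo Fm \<longleftrightarrow>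
     (\<forall>X\<in>Obj C. Fo X \<in> Obj C) \<and>
     (\<forall>f\<in>Mor C. Fm f \<in> hom C (Fo (Dom C f)) (Fo (Cod C f))) \<and>
     (\<forall>X\<in>Obj C. Fm (Ident C X) = Ident C (Fo X)) \<and>
     (\<forall>f\<in>Mor C. \<forall>g\<in>Mor C. Cod C f = Dom C g \<longrightarrow> Fm (Comp C g f) = Comp C (Fm g) (Fm f))"

definition partial_order_on' :: "'p set \<Rightarrow> ('p \<Rightarrow> 'p \<Rightarrow> bool) \<Rightarrow> bool" where
  "partial_order_on' P le \<longleftrightarrow>
     (\<forall>x\<in>P. le x x) \<and>
     (\<forall>x\<in>P. \<forall>y\<in>P. le x y \<and> le y x \<longrightarrow> x = y) \<and>
     (\<forall>x\<in>P. \<forall>y\<in>P. \<forall>z\<in>P. le x y \<and> le y z \<longrightarrow> le x z)"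

definition is_glb :: "'p set \<Rightarrow> ('p \<Rightarrow> 'p \<Rightarrow> bool) \<Rightarrow> 'p set \<Rightarrow> 'p \<Rightarrow> bool" where
  "is_glb P le A m \<longleftrightarrow> m \<in> P \<and> (\<forall>a\<in>A. le m a) \<and> (\<forall>x\<in>P. (\<forall>a\<in>A. le x a) \<longrightarrow> le x m)"

definition meet :: "'p set \<Rightarrow> ('p \<Rightarrow> 'p \<Rightarrow> bool) \<Rightarrow> 'p set \<Rightarrow> 'p" where
  "meet P le A = (THE m. is_glb P le A m)"

text \<open>Fibre \<Phi> Y is the poset (PhiC Y, le Y); reindexing f^* = Phi f maps \<Phi>(Cod f) to \<Phi>(Dom f).\<close>
definition meet_fibration ::
  "('o, 'm) cat \<Rightarrow> ('o \<Rightarrow> 'p set) \<Rightarrow> ('o \<Rightarrow> 'p \<Rightarrow> 'p \<Rightarrow> bool) \<Rightarrow> ('m \<Rightarrow> 'p \<Rightarrow> 'p) \<Rightarrow> bool" where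
  "meet_fibration C PhiC le Phi \<longleftrightarrow>
     (\<forall>Y\<in>Obj C. partial_order_on' (PhiC Y) (le Y)) \<and>
     (\<forall>Y\<in>Obj C. \<forall>A. A \<subseteq> PhiC Y \<longrightarrow> (\<exists>m. is_glb (PhiC Y) (le Y) A m)) \<and>
     (\<forall>f\<in>Mor C. \<forall>x\<in>PhiC (Cod C f). Phi f x \<in> PhiC (Dom C f)) \<and>
     (\<forall>f\<in>Mor C. \<forall>x\<in>PhiC (Cod C f). \<forall>y\<in>PhiC (Cod C f).
        le (Cod C f) x y \<longrightarrow> le (Dom C f) (Phi f x) (Phi f y)) \<and>
     (\<forall>Y\<in>Obj C. \<forall>x\<in>PhiC Y. Phi (Ident C Y) x = x) \<and>
     (\<forall>f\<in>Mor C. \<forall>g\<in>Mor C. Cod C f = Dom C g \<longrightarrow>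
        (\<forall>x\<in>PhiC (Cod C g). Phi (Comp C g f) x = Phi f (Phi g x))) \<and>
     (\<forall>f\<in>Mor C. \<forall>A. A \<subseteq> PhiC (Cod C f) \<longrightarrow>
        is_glb (PhiC (Dom C f)) (le (Dom C f)) (Phi f ` A) (Phi f (meet (PhiC (Cod C f)) (le (Cod C f)) A)))"

definition alpha ::
  "('o, 'm) cat \<Rightarrow> ('o \<Rightarrow> 'p set) \<Rightarrow> ('o \<Rightarrow> 'p \<Rightarrow> 'p \<Rightarrow> bool) \<Rightarrow> ('m \<Rightarrow> 'p \<Rightarrow> 'p) \<Rightarrow> 'p \<Rightarrow> 'o \<Rightarrow> 'm set \<Rightarrow> 'p" where
  "alpha C PhiC le Phi dO Y S = meet (PhiC Y) (le Y) ((\<lambda>k. Phi k dO) ` S)"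

definition gamma ::
  "('o, 'm) cat \<Rightarrow> ('o \<Rightarrow> 'p \<Rightarrow> 'p \<Rightarrow> bool) \<Rightarrow> ('m \<Rightarrow> 'p \<Rightarrow> 'p) \<Rightarrow> 'o \<Rightarrow> 'p \<Rightarrow> 'o \<Rightarrow> 'p \<Rightarrow> 'm set" where
  "gamma C le Phi Om dO Y d = {k \<in> hom C Y Om. le Y d (Phi k dO)}"

definition cl ::
  "('o, 'm) cat \<Rightarrow> ('o \<Rightarrow> 'p set) \<Rightarrow> ('o \<Rightarrow> 'p \<Rightarrow> 'p \<Rightarrow> bool) \<Rightarrow> ('m \<Rightarrow> 'p \<Rightarrow> 'p) \<Rightarrow> 'o \<Rightarrow> 'p \<Rightarrow> 'o \<Rightarrow> 'm set \<Rightarrow> 'm set" where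
  "cl C PhiC le Phi Om dO Y S = gamma C le Phi Om dO Y (alpha C PhiC le Phi dO Y S)"

definition Lam :: "('o, 'm) cat \<Rightarrow> ('m \<Rightarrow> 'm) \<Rightarrow> 'l set \<Rightarrow> ('l \<Rightarrow> 'm) \<Rightarrow> 'm set \<Rightarrow> 'm set" where
  "Lam C Fm L ev S = {Comp C (ev l) (Fm h) | l h. l \<in> L \<and> h \<in> S}"

definition closure_operator :: "'a set \<Rightarrow> ('a set \<Rightarrow> 'a set) \<Rightarrow> bool" where
  "closure_operator H c \<longleftrightarrow>
     (\<forall>S. S \<subseteq> H \<longrightarrow> c S \<subseteq> H) \<and>
     (\<forall>S T. S \<subseteq> T \<and> T \<subseteq> H \<longrightarrow> c S \<subseteq> c T) \<and>
     (\<forall>S. S \<subseteq> H \<longrightarrow> S \<subseteq> c S) \<and>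
     (\<forall>S. S \<subseteq> H \<longrightarrow> c (c S) = c S)"

end

theory Submission
  imports Defs
begin

text \<open>At every object Y, alpha and gamma form an antitone Galois connection:
  T \<subseteq> cl U iff alpha U \<preceq> alpha T. A subclosure cl' of cl at X is extensive and
  lies below the idempotent cl, so it fixes every cl-closed set; in particular
  cl' (cl S) = cl S. Compatibility therefore reads Lam (cl S) \<subseteq> cl (Lam (cl' S))
  at F X, which by the Galois connection at F X is the stated inequality of meets.\<close>

lemma meet_eqI:
  assumes "partial_order_on' P le" "is_glb P le A m"
  shows "meet P le A = m"
  unfolding meet_def
proof (rule the_equality)
  show "is_glb P le A m" by fact
  fix m' assume "is_glb P le A m'"
  with assms show "m' = m" unfolding is_glb_def partial_order_on'_def by metis
qed

lemma partial_order_on'_trans: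
  assumes "partial_order_on' P le" "x \<in> P" "y \<in> P" "z \<in> P" "le x y" "le y z"
  shows "le x z"
  using assms unfolding partial_order_on'_def by blast

lemma meet_fibration_partial_order:
  "meet_fibration C PhiC le Phi \<Longrightarrow> Y \<in> Obj C \<Longrightarrow> partial_order_on' (PhiC Y) (le Y)"
  unfolding meet_fibration_def by simp

lemma meet_fibration_has_glb:
  "meet_fibration C PhiC le Phi \<Longrightarrow> Y \<in> Obj C \<Longrightarrow> A \<subseteq> PhiC Y
    \<Longrightarrow> \<exists>m. is_glb (PhiC Y) (le Y) A m"
  unfolding meet_fibration_def by simp

lemma meet_fibration_reindex_in_fibre:
  assumes "meet_fibration C PhiC le Phi" "d \<in> PhiC Om" "k \<in> hom C Y Om"
  shows "Phi k d \<in> PhiC Y"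
  using assms unfolding meet_fibration_def hom_def by auto

lemma alpha_is_glb:
  assumes mf: "meet_fibration C PhiC le Phi" and Y: "Y \<in> Obj C" and d: "dO \<in> PhiC Om"
    and T: "T \<subseteq> hom C Y Om"
  shows "is_glb (PhiC Y) (le Y) ((\<lambda>k. Phi k dO) ` T) (alpha C PhiC le Phi dO Y T)"
proof -
  have "(\<lambda>k. Phi k dO) ` T \<subseteq> PhiC Y"
    using meet_fibration_reindex_in_fibre[OF mf d] T by blast
  then obtain m where m: "is_glb (PhiC Y) (le Y) ((\<lambda>k. Phi k dO) ` T) m"
    using meet_fibration_has_glb[OF mf Y] by blast
  with meet_eqI[OF meet_fibration_partial_order[OF mf Y] m] show ?thesis
    unfolding alpha_def by simp
qed

lemma alpha_in_fibre:
  assumes "meet_fibration C PhiC le Phi" "Y \<in> Obj C" "dO \<in> PhiC Om" "T \<subseteq> hom C Y Om"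
  shows "alpha C PhiC le Phi dO Y T \<in> PhiC Y"
  using alpha_is_glb[OF assms] unfolding is_glb_def by simp

lemma cl_subset_hom: "cl C PhiC le Phi Om dO Y U \<subseteq> hom C Y Om"
  unfolding cl_def gamma_def by blast

lemma subset_cl_iff_alpha_le:
  assumes mf: "meet_fibration C PhiC le Phi" and Y: "Y \<in> Obj C" and d: "dO \<in> PhiC Om"
    and T: "T \<subseteq> hom C Y Om" and U: "U \<subseteq> hom C Y Om"
  shows "T \<subseteq> cl C PhiC le Phi Om dO Y U \<longleftrightarrow>
         le Y (alpha C PhiC le Phi dO Y U) (alpha C PhiC le Phi dO Y T)"
proof
  assume "T \<subseteq> cl C PhiC le Phi Om dO Y U"
  then have "\<forall>k\<in>T. le Y (alpha C PhiC le Phi dO Y U) (Phi k dO)"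
    unfolding cl_def gamma_def by blast
  with alpha_is_glb[OF mf Y d T] alpha_in_fibre[OF mf Y d U]
  show "le Y (alpha C PhiC le Phi dO Y U) (alpha C PhiC le Phi dO Y T)"
    unfolding is_glb_def by blast
next
  assume le_UT: "le Y (alpha C PhiC le Phi dO Y U) (alpha C PhiC le Phi dO Y T)"
  show "T \<subseteq> cl C PhiC le Phi Om dO Y U"
  proof
    fix k assume k: "k \<in> T"
    then have "le Y (alpha C PhiC le Phi dO Y T) (Phi k dO)"
      using alpha_is_glb[OF mf Y d T] unfolding is_glb_def by blast
    then have "le Y (alpha C PhiC le Phi dO Y U) (Phi k dO)"
      using partial_order_on'_trans[OF meet_fibration_partial_order[OF mf Y]
          alpha_in_fibre[OF mf Y d U] alpha_in_fibre[OF mf Y d T] _ le_UT]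
        meet_fibration_reindex_in_fibre[OF mf d] k T by blast
    with k T show "k \<in> cl C PhiC le Phi Om dO Y U" unfolding cl_def gamma_def by blast
  qed
qed

lemma cl_cl_subset:
  assumes mf: "meet_fibration C PhiC le Phi" and Y: "Y \<in> Obj C" and d: "dO \<in> PhiC Om"
    and S: "S \<subseteq> hom C Y Om"
  shows "cl C PhiC le Phi Om dO Y (cl C PhiC le Phi Om dO Y S) \<subseteq> cl C PhiC le Phi Om dO Y S"
proof -
  let ?cl = "cl C PhiC le Phi Om dO Y" and ?\<alpha> = "alpha C PhiC le Phi dO Y"
  have cl_hom: "?cl U \<subseteq> hom C Y Om" for U by (rule cl_subset_hom)
  note galois = subset_cl_iff_alpha_le[OF mf Y d]
  have "le Y (?\<alpha> S) (?\<alpha> (?cl S))"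
    using galois[OF cl_hom[of S] S] by simp
  moreover have "le Y (?\<alpha> (?cl S)) (?\<alpha> (?cl (?cl S)))"
    using galois[OF cl_hom[of "?cl S"] cl_hom[of S]] by simp
  ultimately have "le Y (?\<alpha> S) (?\<alpha> (?cl (?cl S)))"
    by (rule partial_order_on'_trans[OF meet_fibration_partial_order[OF mf Y]
          alpha_in_fibre[OF mf Y d S] alpha_in_fibre[OF mf Y d cl_hom[of S]]
          alpha_in_fibre[OF mf Y d cl_hom[of "?cl S"]]])
  then show ?thesis using galois[OF cl_hom[of "?cl S"] S] by simp
qed

lemma subclosure_fixes_closed:
  assumes "closure_operator H c" "\<forall>S. S \<subseteq> H \<longrightarrow> c S \<subseteq> k S"
    and "T \<subseteq> H" "k T \<subseteq> T"
  shows "c T = T"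
proof
  show "c T \<subseteq> T" using assms(2-4) by blast
  show "T \<subseteq> c T" using assms(1,3) unfolding closure_operator_def by simp
qed

lemma endofunctor_obj: "endofunctor C Fo Fm \<Longrightarrow> X \<in> Obj C \<Longrightarrow> Fo X \<in> Obj C"
  unfolding endofunctor_def by simp

lemma Lam_subset_hom:
  assumes cat: "category C" and F: "endofunctor C Fo Fm"
    and ev: "\<forall>l\<in>L. ev l \<in> hom C (Fo Om) Om" and S: "S \<subseteq> hom C X Om"
  shows "Lam C Fm L ev S \<subseteq> hom C (Fo X) Om"
proof
  fix x assume "x \<in> Lam C Fm L ev S"
  then obtain l h where x: "x = Comp C (ev l) (Fm h)" and l: "l \<in> L" and h: "h \<in> S"
    unfolding Lam_def by blast
  have Fh: "Fm h \<in> hom C (Fo X) (Fo Om)"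
    using F h S unfolding endofunctor_def hom_def by auto
  moreover have "ev l \<in> hom C (Fo Om) Om" using ev l by blast
  ultimately show "x \<in> hom C (Fo X) Om"
    using cat unfolding x category_def hom_def by auto
qed

theorem lemma2:
  fixes C :: "('o, 'm) cat"
    and PhiC :: "'o \<Rightarrow> 'p set" and le :: "'o \<Rightarrow> 'p \<Rightarrow> 'p \<Rightarrow> bool" and Phi :: "'m \<Rightarrow> 'p \<Rightarrow> 'p"
    and Om :: 'o and dO :: 'p
    and Fo :: "'o \<Rightarrow> 'o" and Fm :: "'m \<Rightarrow> 'm"
    and L :: "'l set" and ev :: "'l \<Rightarrow> 'm"
    and X :: 'o and cl' :: "'m set \<Rightarrow> 'm set"
  assumes "category C"
    and "Om \<in> Obj C"
    and "meet_fibration C PhiC le Phi"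
    and "dO \<in> PhiC Om"
    and "endofunctor C Fo Fm"
    and "\<forall>l\<in>L. ev l \<in> hom C (Fo Om) Om"
    and "X \<in> Obj C"
    and "closure_operator (hom C X Om) cl'"
    and "\<forall>S. S \<subseteq> hom C X Om \<longrightarrow> cl' S \<subseteq> cl C PhiC le Phi Om dO X S"
  shows "(\<forall>S. S \<subseteq> hom C X Om \<longrightarrow>
            Lam C Fm L ev (cl' (cl C PhiC le Phi Om dO X S))
              \<subseteq> cl C PhiC le Phi Om dO (Fo X) (Lam C Fm L ev (cl' S)))
         \<longleftrightarrow>
         (\<forall>S. S \<subseteq> hom C X Om \<longrightarrow>
            le (Fo X) (alpha C PhiC le Phi dO (Fo X) (Lam C Fm L ev (cl' S)))
                      (alpha C PhiC le Phi dO (Fo X) (Lam C Fm L ev (cl C PhiC le Phi Om dO X S))))"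
proof -
  note cat = assms(1) and mf = assms(3) and d = assms(4) and F = assms(5) and ev = assms(6)
    and X = assms(7) and co = assms(8) and sub = assms(9)
  let ?cl = "cl C PhiC le Phi Om dO X"
  have FX: "Fo X \<in> Obj C" using endofunctor_obj[OF F X] .
  have pointwise:
    "Lam C Fm L ev (cl' (?cl S)) \<subseteq> cl C PhiC le Phi Om dO (Fo X) (Lam C Fm L ev (cl' S))
     \<longleftrightarrow> le (Fo X) (alpha C PhiC le Phi dO (Fo X) (Lam C Fm L ev (cl' S)))
                  (alpha C PhiC le Phi dO (Fo X) (Lam C Fm L ev (?cl S)))"
    if S: "S \<subseteq> hom C X Om" for S
  proof -
    have "cl' (?cl S) = ?cl S"
      by (rule subclosure_fixes_closed[OF co sub cl_subset_hom cl_cl_subset[OF mf X d S]])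
    moreover have "cl' S \<subseteq> hom C X Om" using co S unfolding closure_operator_def by simp
    ultimately show ?thesis
      using subset_cl_iff_alpha_le[OF mf FX d Lam_subset_hom[OF cat F ev cl_subset_hom]
          Lam_subset_hom[OF cat F ev]] by simp
  qed
  show ?thesis by (simp add: pointwise)
qed

end
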